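(* Let $K$ be a field, $S=K[x_1,\ldots,x_n]$, $I\subset S$ a monomial ideal with $I\ne S$ and $G(I)=\{x^{a_1},\ldots,x^{a_m}\}$. Let $T$ be the polynomial ring over $K$ in variables $x_{l1},\ldots,x_{lm_l}$, $l=1,\ldots,n$. For $l=1,\ldots,n$ and $j=1,\ldots,m$ let $L_{l,a_j(l)}$ be a monomial ideal in $x_{l1},\ldots,x_{lm_l}$ with $L_{l,a_j(l)}\subset L_{l,a_k(l)}$ whenever $a_j(l)\ge a_k(l)$, and let $L_j=\prod_{l=1}^nL_{l,a_j(l)}\subset T$. Then the ideals $L_{ij}$ of the complex $\mathbb{F}^*$ of $L_1,\ldots,L_m$ induced by $I$ satisfy \[ L_{ij}=\prod_{l=1}^nL_{l,a_{ij}(l)}\quad\text{for all }1\le i\le p,\ 1\le j\le\beta_i, \] where $L_{l,a_{ij}(l)}$ denotes $L_{l,a_k(l)}$ for any $k$ with $a_k(l)=a_{ij}(l)$ (such $k$ always exists).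
   Context: For $a\in\mathbb{N}^n$, $x^a=x_1^{a(1)}\cdots x_n^{a(n)}$; $G(I)$ is the minimal monomial generating set. Let $0\to F_p\to\cdots\to F_1\to F_0\to S/I\to 0$ be the $\mathbb{Z}^n$-graded minimal free resolution of $S/I$ with differential $\partial$, where $F_0=S$ with basis $f_{01}$ of degree $0$, and $F_i=\bigoplus_{j=1}^{\beta_i}Sf_{ij}$ with $f_{ij}$ homogeneous of multidegree $a_{ij}\in\mathbb{N}^n$; here $\beta_1=m$, $a_{1j}=a_j$, $\partial(f_{1j})=x^{a_j}f_{01}$. Write $\partial(f_{ij})=\sum_k\lambda^{(i)}_{kj}x^{a_{ij}-a_{i-1,k}}f_{i-1,k}$ with $\lambda^{(i)}_{kj}\in K$, where $\lambda^{(i)}_{kj}=0$ whenever $a_{ij}-a_{i-1,k}\notin\mathbb{N}^n$. The ideals of $\mathbb{F}^*$ are defined by $L_{1j}=L_j$ and, for $i\ge2$, $L_{ij}=\bigcap_{k:\lambda^{(i)}_{kj}\ne0}L_{i-1,k}$. *)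

theory Defs
  imports Main "HOL-Library.Poly_Mapping"
begin

type_synonym ('v, 'k) mpoly = "('v \<Rightarrow>\<^sub>0 nat) \<Rightarrow>\<^sub>0 'k"

definition xmon :: "('v::finite \<Rightarrow> nat) \<Rightarrow> ('v, 'k::field) mpoly" where
  "xmon e = Poly_Mapping.single (Abs_poly_mapping e) 1"

definition const :: "'k::field \<Rightarrow> ('v, 'k) mpoly" where
  "const c = Poly_Mapping.single 0 c"

definition ideal_gen :: "'a::comm_ring_1 set \<Rightarrow> 'a set" where
  "ideal_gen A = {\<Sum>x\<in>F. r x * x | F r. finite F \<and> F \<subseteq> A}"

definition monomial_ideal_in :: "'w set \<Rightarrow> ('w, 'k::field) mpoly set \<Rightarrow> bool" where
  "monomial_ideal_in V J \<longleftrightarrow>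
     (\<exists>M. (\<forall>t\<in>M. Poly_Mapping.keys t \<subseteq> V) \<and> J = ideal_gen ((\<lambda>t. Poly_Mapping.single t 1) ` M))"

definition ideal_prod :: "('v::finite \<Rightarrow> 'a::comm_ring_1 set) \<Rightarrow> 'a set" where
  "ideal_prod J = ideal_gen {\<Prod>l\<in>UNIV. f l | f. \<forall>l. f l \<in> J l}"

text \<open>Free module F_i = S^{beta i}: coordinate vectors indexed by 0..<beta i.\<close>
definition freemod :: "nat \<Rightarrow> (nat \<Rightarrow> ('v, 'k::field) mpoly) set" where
  "freemod b = {v. \<forall>j\<ge>b. v j = 0}"

definition diff ::
  "(nat \<Rightarrow> nat) \<Rightarrow> (nat \<Rightarrow> nat \<Rightarrow> 'v::finite \<Rightarrow> nat) \<Rightarrow> (nat \<Rightarrow> nat \<Rightarrow> nat \<Rightarrow> 'k::field)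
    \<Rightarrow> nat \<Rightarrow> (nat \<Rightarrow> ('v, 'k) mpoly) \<Rightarrow> (nat \<Rightarrow> ('v, 'k) mpoly)" where
  "diff beta deg lam i v =
     (\<lambda>k. if k < beta (i - 1)
          then (\<Sum>j<beta i. const (lam i k j) * xmon (deg i j - deg (i - 1) k) * v j)
          else 0)"

text \<open>(beta, deg, lam, p) is the Z^n-graded minimal free resolution of S/I, I generated by
  the monomials x^(a j), j < m.  Indices: homological degree i, basis index j < beta i
  (0-based).\<close>
definition is_min_graded_resolution ::
  "nat \<Rightarrow> (nat \<Rightarrow> 'v::finite \<Rightarrow> nat) \<Rightarrow> nat \<Rightarrow> (nat \<Rightarrow> nat) \<Rightarrow> (nat \<Rightarrow> nat \<Rightarrow> 'v \<Rightarrow> nat)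
    \<Rightarrow> (nat \<Rightarrow> nat \<Rightarrow> nat \<Rightarrow> 'k::field) \<Rightarrow> bool" where
  "is_min_graded_resolution m a p beta deg lam \<longleftrightarrow>
     beta 0 = 1 \<and> deg 0 0 = (\<lambda>_. 0) \<and>
     beta 1 = m \<and> (\<forall>j<m. deg 1 j = a j \<and> lam 1 0 j = 1) \<and>
     (\<forall>i>p. beta i = 0) \<and>
     (\<forall>i\<ge>1. \<forall>k<beta (i - 1). \<forall>j<beta i. lam i k j \<noteq> 0 \<longrightarrow> deg (i - 1) k \<le> deg i j) \<and>
     \<comment> \<open>exactness at F_i for i \<ge> 1 (im d_1 = I holds by construction)\<close>
     (\<forall>i\<ge>1. \<forall>v\<in>(freemod (beta i) :: (nat \<Rightarrow> ('v, 'k) mpoly) set).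
        diff beta deg lam i v = (\<lambda>_. 0) \<longleftrightarrow> v \<in> diff beta deg lam (i + 1) ` freemod (beta (i + 1))) \<and>
     \<comment> \<open>minimality: all matrix entries lie in the graded maximal ideal\<close>
     (\<forall>i\<ge>1. \<forall>k<beta (i - 1). \<forall>j<beta i. lam i k j \<noteq> 0 \<longrightarrow> deg (i - 1) k \<noteq> deg i j)"

fun Lcx :: "(nat \<Rightarrow> 'a set) \<Rightarrow> (nat \<Rightarrow> nat) \<Rightarrow> (nat \<Rightarrow> nat \<Rightarrow> nat \<Rightarrow> 'k::zero) \<Rightarrow> nat \<Rightarrow> nat \<Rightarrow> 'a set" where
  "Lcx Lj beta lam 0 j = UNIV"
| "Lcx Lj beta lam (Suc 0) j = Lj j"
| "Lcx Lj beta lam (Suc (Suc i)) j =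
     \<Inter> {Lcx Lj beta lam (Suc i) k | k. k < beta (Suc i) \<and> lam (Suc (Suc i)) k j \<noteq> 0}"

end

theory Submission
  imports Defs HOL.Modules
begin

text \<open>Minimality and exactness force each basis element of F_i, i \<ge> 2, to have as multidegree
  the componentwise maximum (the lcm) of the multidegrees of the basis elements of F_(i-1) occurring
  in its differential: otherwise a monomial factor could be split off, producing a cycle with a unit
  coordinate. Hence every coordinate a_ij(l) is some a_k(l). Monomial ideals in disjoint sets of
  variables multiply to their intersection, so inductively L_ij is the intersection, over l and over
  the k with \<lambda>_kj \<noteq> 0, of the ideals L_(l, a_(i-1,k)(l)); for fixed l these form a chain whose
  smallest member is L_(l, a_ij(l)).\<close>

interpretation ideal: module "(*) :: 'a::comm_ring_1 \<Rightarrow> 'a \<Rightarrow> 'a"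
  by standard (auto simp: algebra_simps)

lemma ideal_gen_eq_span: "ideal_gen A = ideal.span A"
  unfolding ideal_gen_def ideal.span_explicit by simp

lemma ideal_prod_subset:
  fixes J :: "'v::finite \<Rightarrow> 'a::comm_ring_1 set"
  assumes J: "J l = ideal_gen A"
  shows "ideal_prod J \<subseteq> J l"
proof -
  have "(\<Prod>l'\<in>UNIV. f l') \<in> J l" if "\<forall>l'. f l' \<in> J l'" for f
  proof -
    have "(\<Prod>l'\<in>UNIV. f l') = (\<Prod>l'\<in>UNIV - {l}. f l') * f l"
      by (metis finite UNIV_I mult.commute prod.remove)
    also have "\<dots> \<in> J l"
      using that J unfolding ideal_gen_eq_span by (metis ideal.span_scale)
    finally show ?thesis .
  qed
  then show ?thesis
    unfolding ideal_prod_def ideal_gen_eq_span J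
    by (intro ideal.span_minimal) (auto simp: J ideal_gen_eq_span)
qed

lemma poly_mapping_sum_single:
  "f = (\<Sum>t\<in>Poly_Mapping.keys f. Poly_Mapping.single t (Poly_Mapping.lookup f t))"
  by (rule poly_mapping_eqI) (simp add: lookup_sum lookup_single when_def in_keys_iff)

text \<open>Divisibility of monomials is written additively on exponents: \<open>\<exists>u. t = s + u\<close>.\<close>

lemma keys_mult_single:
  fixes s :: "'a::comm_monoid_add"
  assumes "t \<in> Poly_Mapping.keys (r * Poly_Mapping.single s (c::'k::comm_ring_1))"
  shows "\<exists>u. t = s + u"
  using keys_mult[of r "Poly_Mapping.single s c"] assms
  by (auto split: if_splits simp: add.commute)

lemma keys_monomial_ideal:
  assumes "f \<in> ideal_gen ((\<lambda>t. Poly_Mapping.single t (1::'k::comm_ring_1)) ` M)"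
    and "t \<in> Poly_Mapping.keys f"
  shows "\<exists>s\<in>M. \<exists>u. t = s + u"
proof -
  obtain F r where F: "finite F" "F \<subseteq> (\<lambda>t. Poly_Mapping.single t 1) ` M" "f = (\<Sum>x\<in>F. r x * x)"
    using assms(1) unfolding ideal_gen_def by blast
  then obtain x where x: "x \<in> F" "t \<in> Poly_Mapping.keys (r x * x)"
    using assms(2) keys_sum[of "\<lambda>x. r x * x" F] by blast
  then obtain s where "s \<in> M" "x = Poly_Mapping.single s 1"
    using F by blast
  then show ?thesis
    using x keys_mult_single by blast
qed

lemma prod_single_one:
  "finite A \<Longrightarrow> (\<Prod>l\<in>A. Poly_Mapping.single (s l) (1::'k::comm_ring_1))
     = Poly_Mapping.single (\<Sum>l\<in>A. s l) 1"
  by (induction A rule: finite_induct) (auto simp: mult_single)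

lemma exponent_sum_blocks_dvd:
  fixes s :: "'v::finite \<Rightarrow> ('w \<Rightarrow>\<^sub>0 nat)"
  assumes block: "\<And>l. Poly_Mapping.keys (s l) \<subseteq> blk -` {l}"
    and dvd: "\<And>l. \<exists>u. t = s l + u"
  shows "\<exists>u. t = (\<Sum>l\<in>UNIV. s l) + u"
proof -
  have lookup_sum_blocks: "Poly_Mapping.lookup (\<Sum>l\<in>UNIV. s l) w = Poly_Mapping.lookup (s (blk w)) w" for w
  proof -
    have "Poly_Mapping.lookup (s l) w = 0" if "l \<noteq> blk w" for l
      using block[of l] that by (auto simp: in_keys_iff)
    then show ?thesis
      unfolding lookup_sum by (subst sum.remove[of _ "blk w"]) auto
  qed
  have "Poly_Mapping.lookup (\<Sum>l\<in>UNIV. s l) w \<le> Poly_Mapping.lookup t w" for w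
    using dvd[of "blk w"] by (auto simp: lookup_sum_blocks lookup_add)
  then have "t = (\<Sum>l\<in>UNIV. s l) + (t - (\<Sum>l\<in>UNIV. s l))"
    by (intro poly_mapping_eqI) (simp add: lookup_add lookup_minus)
  then show ?thesis ..
qed

lemma single_mem_ideal_prod:
  fixes M :: "'v::finite \<Rightarrow> ('w \<Rightarrow>\<^sub>0 nat) set"
  assumes block: "\<And>l. \<forall>s\<in>M l. Poly_Mapping.keys s \<subseteq> blk -` {l}"
    and dvd: "\<And>l. \<exists>s\<in>M l. \<exists>u. t = s + u"
  shows "Poly_Mapping.single t (c::'k::comm_ring_1)
           \<in> ideal_prod (\<lambda>l. ideal_gen ((\<lambda>s. Poly_Mapping.single s 1) ` M l))"
proof -
  have "\<forall>l. \<exists>s. s \<in> M l \<and> (\<exists>u. t = s + u)"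
    using dvd by blast
  then obtain s where s: "\<And>l. s l \<in> M l" "\<And>l. \<exists>u. t = s l + u"
    by (auto dest!: choice)
  have "\<And>l. Poly_Mapping.keys (s l) \<subseteq> blk -` {l}"
    using block s(1) by blast
  then obtain u where t: "t = (\<Sum>l\<in>UNIV. s l) + u"
    using exponent_sum_blocks_dvd s(2) by blast
  have factor: "Poly_Mapping.single t c = Poly_Mapping.single u c * (\<Prod>l\<in>UNIV. Poly_Mapping.single (s l) 1)"
    unfolding prod_single_one[OF finite] mult_single t by (simp add: add.commute)
  have "Poly_Mapping.single (s l) 1 \<in> ideal_gen ((\<lambda>s. Poly_Mapping.single s (1::'k)) ` M l)" for l
    unfolding ideal_gen_eq_span by (rule ideal.span_base) (use s(1) in blast)
  then have "(\<Prod>l\<in>UNIV. Poly_Mapping.single (s l) (1::'k))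
      \<in> {\<Prod>l\<in>UNIV. f l | f. \<forall>l. f l \<in> ideal_gen ((\<lambda>s. Poly_Mapping.single s 1) ` M l)}"
    by blast
  then show ?thesis
    unfolding ideal_prod_def ideal_gen_eq_span factor by (intro ideal.span_scale ideal.span_base)
qed

lemma ideal_prod_eq_Inter:
  fixes J :: "'v::finite \<Rightarrow> ('w, 'k::field) mpoly set"
  assumes mon: "\<And>l. monomial_ideal_in (blk -` {l}) (J l)"
  shows "ideal_prod J = (\<Inter>l. J l)"
proof
  obtain M where block: "\<And>l. \<forall>s\<in>M l. Poly_Mapping.keys s \<subseteq> blk -` {l}"
    and J: "\<And>l. J l = ideal_gen ((\<lambda>s. Poly_Mapping.single s 1) ` M l)"
    using mon unfolding monomial_ideal_in_def by metis
  then have J_eq: "J = (\<lambda>l. ideal_gen ((\<lambda>s. Poly_Mapping.single s 1) ` M l))"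
    by (simp add: fun_eq_iff)
  show "ideal_prod J \<subseteq> (\<Inter>l. J l)"
    by (intro INT_greatest) (rule ideal_prod_subset[OF J])
  show "(\<Inter>l. J l) \<subseteq> ideal_prod J"
  proof
    fix f assume f: "f \<in> (\<Inter>l. J l)"
    have "Poly_Mapping.single t (Poly_Mapping.lookup f t) \<in> ideal_prod J"
      if "t \<in> Poly_Mapping.keys f" for t
    proof -
      have "\<exists>s\<in>M l. \<exists>u. t = s + u" for l
        using f J[of l] keys_monomial_ideal[OF _ that] by blast
      then show ?thesis
        unfolding J_eq by (rule single_mem_ideal_prod[OF block])
    qed
    then have "(\<Sum>t\<in>Poly_Mapping.keys f. Poly_Mapping.single t (Poly_Mapping.lookup f t)) \<in> ideal_prod J"
      unfolding ideal_prod_def ideal_gen_eq_span by (intro ideal.span_sum) auto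
    then show "f \<in> ideal_prod J"
      by (subst poly_mapping_sum_single)
  qed
qed

lemma Abs_poly_mapping_eq_0_iff:
  "Abs_poly_mapping (e :: 'v::finite \<Rightarrow> 'b::zero) = 0 \<longleftrightarrow> e = (\<lambda>_. 0)"
  by (metis Abs_poly_mapping finite lookup_Abs_poly_mapping lookup_zero)

lemma xmon_mult_xmon: "xmon c * (xmon e :: ('v::finite, 'k::field) mpoly) = xmon (\<lambda>v. c v + e v)"
proof -
  have "Abs_poly_mapping c + Abs_poly_mapping e = Abs_poly_mapping (\<lambda>v. c v + e v)"
    by (rule poly_mapping_eqI) (simp add: lookup_add)
  then show ?thesis
    unfolding xmon_def by (simp add: mult_single)
qed

lemma lookup_single_mult_zero:
  assumes "(s :: 'a \<Rightarrow>\<^sub>0 nat) \<noteq> 0"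
  shows "Poly_Mapping.lookup (Poly_Mapping.single s (c::'k::comm_ring_1) * q) 0 = 0"
proof (rule ccontr)
  assume "Poly_Mapping.lookup (Poly_Mapping.single s c * q) 0 \<noteq> 0"
  then have "0 \<in> Poly_Mapping.keys (Poly_Mapping.single s c * q)"
    by (simp add: in_keys_iff)
  then obtain u where "0 = s + u"
    using keys_mult_single[of 0 q s c] by (auto simp: mult.commute)
  then show False
    using assms by (metis add_is_0 lookup_add lookup_zero poly_mapping_eqI)
qed

lemma lookup_single_one_mult:
  "Poly_Mapping.lookup (Poly_Mapping.single (s::'a::cancel_comm_monoid_add) (1::'k::comm_ring_1) * q) (s + t)
    = Poly_Mapping.lookup q t"
  by (simp add: lookup_mult lookup_single when_mult cong: when_cong)

lemma xmon_mult_eq_0D: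
  assumes "xmon c * (q :: ('v::finite, 'k::field) mpoly) = 0"
  shows "q = 0"
proof (rule poly_mapping_eqI)
  fix t
  have "Poly_Mapping.lookup q t = Poly_Mapping.lookup (xmon c * q) (Abs_poly_mapping c + t)"
    unfolding xmon_def by (rule lookup_single_one_mult[symmetric])
  then show "Poly_Mapping.lookup q t = Poly_Mapping.lookup 0 t"
    using assms by simp
qed

lemma lookup_xmon_mult_zero:
  "c \<noteq> (\<lambda>_. 0) \<Longrightarrow> Poly_Mapping.lookup (xmon c * (q :: ('v::finite, 'k::field) mpoly)) 0 = 0"
  by (simp add: xmon_def lookup_single_mult_zero Abs_poly_mapping_eq_0_iff)

lemma lookup_const_mult_xmon_mult_zero:
  "c \<noteq> (\<lambda>_. 0) \<Longrightarrow> Poly_Mapping.lookup (const a * xmon c * (q :: ('v::finite, 'k::field) mpoly)) 0 = 0"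
  by (metis lookup_xmon_mult_zero mult.assoc mult.commute)

lemma diff_in_freemod: "diff beta deg lam i v \<in> freemod (beta (i - 1))"
  by (simp add: freemod_def diff_def)

lemma diff_scale: "diff beta deg lam i (\<lambda>j. q * v j) = (\<lambda>k. q * diff beta deg lam i v k)"
proof -
  have "(\<Sum>j<beta i. const (lam i k j) * xmon (deg i j - deg (i - 1) k) * (q * v j))
      = q * (\<Sum>j<beta i. const (lam i k j) * xmon (deg i j - deg (i - 1) k) * v j)" for k
    unfolding sum_distrib_left by (rule sum.cong) (simp_all only: mult.left_commute)
  then show ?thesis
    by (simp add: diff_def fun_eq_iff)
qed

lemma diff_minus:
  "diff beta deg lam i (\<lambda>j. v j - w j) = (\<lambda>k. diff beta deg lam i v k - diff beta deg lam i w k)"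
  by (simp add: diff_def fun_eq_iff sum_subtractf right_diff_distrib)

lemma diff_unit:
  assumes "j < beta i"
  shows "diff beta deg lam i (\<lambda>j'. if j' = j then 1 else 0)
    = (\<lambda>k. if k < beta (i - 1) then const (lam i k j) * xmon (deg i j - deg (i - 1) k) else 0)"
proof -
  have "(\<Sum>j'<beta i. const (lam i k j') * xmon (deg i j' - deg (i - 1) k) * (if j' = j then 1 else 0))
      = const (lam i k j) * xmon (deg i j - deg (i - 1) k)" for k
    using assms by (simp add: sum.delta' if_distrib[of "(*) _"] cong: if_cong)
  then show ?thesis
    by (simp add: diff_def fun_eq_iff)
qed

lemma fun_diff_eq_0_iff_le: "f - g = (\<lambda>_. 0) \<longleftrightarrow> f \<le> (g :: 'a \<Rightarrow> nat)"
  by (auto simp: fun_eq_iff le_fun_def)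

locale min_graded_resolution =
  fixes m :: nat and a :: "nat \<Rightarrow> 'v::finite \<Rightarrow> nat" and p :: nat and beta :: "nat \<Rightarrow> nat"
    and deg :: "nat \<Rightarrow> nat \<Rightarrow> 'v \<Rightarrow> nat" and lam :: "nat \<Rightarrow> nat \<Rightarrow> nat \<Rightarrow> 'k::field"
  assumes resolution: "is_min_graded_resolution m a p beta deg lam"
begin

abbreviation d :: "nat \<Rightarrow> (nat \<Rightarrow> ('v, 'k) mpoly) \<Rightarrow> nat \<Rightarrow> ('v, 'k) mpoly" where
  "d \<equiv> diff beta deg lam"

lemma beta_1: "beta 1 = m"
  and deg_1: "j < m \<Longrightarrow> deg 1 j = a j"
  using resolution unfolding is_min_graded_resolution_def by auto

lemma exact:
  "i \<ge> 1 \<Longrightarrow> v \<in> freemod (beta i) \<Longrightarrow>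
    d i v = (\<lambda>_. 0) \<longleftrightarrow> v \<in> d (i + 1) ` freemod (beta (i + 1))"
  using resolution unfolding is_min_graded_resolution_def by blast

lemma
  assumes "i \<ge> 1" "k < beta (i - 1)" "j < beta i" "lam i k j \<noteq> 0"
  shows deg_le: "deg (i - 1) k \<le> deg i j" and deg_neq: "deg (i - 1) k \<noteq> deg i j"
proof -
  have "\<forall>i\<ge>1. \<forall>k<beta (i - 1). \<forall>j<beta i. lam i k j \<noteq> 0 \<longrightarrow> deg (i - 1) k \<le> deg i j"
    using resolution unfolding is_min_graded_resolution_def by (elim conjE) assumption
  moreover have "\<forall>i\<ge>1. \<forall>k<beta (i - 1). \<forall>j<beta i. lam i k j \<noteq> 0 \<longrightarrow> deg (i - 1) k \<noteq> deg i j"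
    using resolution unfolding is_min_graded_resolution_def by (elim conjE) assumption
  ultimately
  show "deg (i - 1) k \<le> deg i j" "deg (i - 1) k \<noteq> deg i j"
    using assms by blast+
qed

lemma d_d_eq_0: "i \<ge> 2 \<Longrightarrow> v \<in> freemod (beta i) \<Longrightarrow> d (i - 1) (d i v) = (\<lambda>_. 0)"
proof -
  assume "i \<ge> 2" "v \<in> freemod (beta i)"
  then have "d i v \<in> d (i - 1 + 1) ` freemod (beta (i - 1 + 1))"
    by simp
  with \<open>i \<ge> 2\<close> show ?thesis
    using exact[of "i - 1" "d i v"] diff_in_freemod[of beta deg lam i v] by simp
qed

lemma boundary_const_coeff_zero:
  assumes "k < beta i"
  shows "Poly_Mapping.lookup (d (Suc i) z k) 0 = 0"
proof -
  have "Poly_Mapping.lookup (const (lam (Suc i) k j) * xmon (deg (Suc i) j - deg i k) * z j) 0 = 0"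
    if "j < beta (Suc i)" for j
  proof (cases "lam (Suc i) k j = 0")
    case True
    then show ?thesis by (simp add: const_def)
  next
    case False
    then have "deg i k \<le> deg (Suc i) j" "deg i k \<noteq> deg (Suc i) j"
      using deg_le[of "Suc i" k j] deg_neq[of "Suc i" k j] assms that by simp_all
    then have "deg (Suc i) j - deg i k \<noteq> (\<lambda>_. 0)"
      by (auto simp: fun_diff_eq_0_iff_le)
    then show ?thesis by (rule lookup_const_mult_xmon_mult_zero)
  qed
  then show ?thesis
    using assms by (simp add: diff_def lookup_sum)
qed

lemma cycle_const_coeff_zero:
  assumes "i \<ge> 1" "v \<in> freemod (beta i)" "d i v = (\<lambda>_. 0)" "j < beta i"
  shows "Poly_Mapping.lookup (v j) 0 = 0"
proof -
  obtain z where "v = d (Suc i) z"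
    using exact assms(1-3) by auto
  then show ?thesis
    using boundary_const_coeff_zero[OF assms(4)] by simp
qed

lemma column_nonzero:
  assumes "i \<ge> 1" "j < beta i"
  shows "\<exists>k<beta (i - 1). lam i k j \<noteq> 0"
proof (rule ccontr)
  let ?e = "\<lambda>j'. if j' = j then 1 else 0 :: ('v, 'k) mpoly"
  assume "\<not> ?thesis"
  then have "d i ?e = (\<lambda>_. 0)"
    using assms(2) by (auto simp: diff_unit const_def)
  then have "Poly_Mapping.lookup (?e j) 0 = 0"
    using assms by (intro cycle_const_coeff_zero) (auto simp: freemod_def)
  then show False by simp
qed

lemma deg_least_upper_bound:
  assumes i: "i \<ge> 2" and j: "j < beta i"
    and ub: "\<And>k. k < beta (i - 1) \<Longrightarrow> lam i k j \<noteq> 0 \<Longrightarrow> deg (i - 1) k \<le> b"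
    and b: "b \<le> deg i j"
  shows "b = deg i j"
proof (rule ccontr)
  txt \<open>Otherwise \<open>x\<^sup>c\<close>, \<open>c = deg i j - b \<noteq> 0\<close>, divides \<open>d e\<^sub>j\<close>; exactness lifts the quotient
    to some \<open>u\<close>, and \<open>e\<^sub>j - x\<^sup>c u\<close> is a cycle with constant term \<open>1\<close> at \<open>j\<close>.\<close>
  assume "b \<noteq> deg i j"
  define c where "c = deg i j - b"
  have c: "c \<noteq> (\<lambda>_. 0)"
    using b \<open>b \<noteq> deg i j\<close> by (simp add: c_def fun_diff_eq_0_iff_le)
  define e :: "nat \<Rightarrow> ('v, 'k) mpoly" where "e = (\<lambda>j'. if j' = j then 1 else 0)"
  define w :: "nat \<Rightarrow> ('v, 'k) mpoly" where
    "w = (\<lambda>k. if k < beta (i - 1) then const (lam i k j) * xmon (b - deg (i - 1) k) else 0)"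
  have e: "e \<in> freemod (beta i)" and w: "w \<in> freemod (beta (i - 1))"
    using j by (simp_all add: e_def w_def freemod_def)
  have factor: "d i e = (\<lambda>k. xmon c * w k)"
  proof
    fix k
    show "d i e k = xmon c * w k"
    proof (cases "k < beta (i - 1) \<and> lam i k j \<noteq> 0")
      case True
      then have "deg i j - deg (i - 1) k = (\<lambda>v. c v + (b - deg (i - 1) k) v)"
        using ub b by (auto simp: c_def fun_eq_iff le_fun_def)
      then have "xmon (deg i j - deg (i - 1) k) = xmon c * (xmon (b - deg (i - 1) k) :: ('v, 'k) mpoly)"
        by (simp add: xmon_mult_xmon)
      then show ?thesis
        using True j by (simp add: e_def w_def diff_unit mult.left_commute)
    qed (use j in \<open>auto simp: e_def w_def diff_unit const_def\<close>)
  qed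
  have "(\<lambda>k. xmon c * d (i - 1) w k) = (\<lambda>_. 0)"
    using d_d_eq_0[OF i e] by (simp add: factor diff_scale)
  then have "d (i - 1) w = (\<lambda>_. 0)"
    by (auto simp: fun_eq_iff intro: xmon_mult_eq_0D)
  then have "w \<in> d (i - 1 + 1) ` freemod (beta (i - 1 + 1))"
    using exact[OF _ w] i by simp
  then obtain u where u: "u \<in> freemod (beta i)" "w = d i u"
    using i by (auto simp: le_add_diff_inverse2)
  let ?v = "\<lambda>j'. e j' - xmon c * u j'"
  have "d i ?v = (\<lambda>_. 0)"
    by (simp add: diff_minus diff_scale factor u(2)[symmetric])
  moreover have "?v \<in> freemod (beta i)"
    using e u(1) by (simp add: freemod_def)
  moreover have "Poly_Mapping.lookup (?v j) 0 \<noteq> 0"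
    using lookup_xmon_mult_zero[OF c, of "u j"] by (simp add: e_def lookup_minus)
  ultimately show False
    using cycle_const_coeff_zero[of i ?v j] i j by linarith
qed

lemma deg_attained:
  assumes "i \<ge> 2" "j < beta i"
  shows "\<exists>k<beta (i - 1). lam i k j \<noteq> 0 \<and> deg (i - 1) k l = deg i j l"
proof -
  define S where "S = {k. k < beta (i - 1) \<and> lam i k j \<noteq> 0}"
  have S: "finite S" "S \<noteq> {}"
    using column_nonzero assms by (auto simp: S_def)
  define b where "b = (\<lambda>l. Max ((\<lambda>k. deg (i - 1) k l) ` S))"
  have "b = deg i j"
  proof (rule deg_least_upper_bound[OF assms])
    show "deg (i - 1) k \<le> b" if "k < beta (i - 1)" "lam i k j \<noteq> 0" for k
      using S that by (auto simp: le_fun_def b_def S_def)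
    show "b \<le> deg i j"
      using S assms deg_le by (auto simp: le_fun_def b_def S_def)
  qed
  moreover have "b l \<in> (\<lambda>k. deg (i - 1) k l) ` S"
    unfolding b_def using S by (intro Max_in) auto
  ultimately show ?thesis
    by (auto simp: S_def)
qed

lemma deg_realized: "j < beta (Suc i) \<Longrightarrow> \<exists>k<m. a k l = deg (Suc i) j l"
proof (induction i arbitrary: j)
  case 0
  then show ?case
    using beta_1 deg_1 by auto
next
  case (Suc i)
  obtain k where k: "k < beta (Suc i)" "deg (Suc i) k l = deg (Suc (Suc i)) j l"
    using deg_attained[of "Suc (Suc i)" j l] Suc.prems by auto
  then show ?case
    using Suc.IH[OF k(1)] by metis
qed

lemma Lcx_eq_ideal_prod:
  fixes blk :: "'w::finite \<Rightarrow> 'v" and L :: "'v \<Rightarrow> nat \<Rightarrow> ('w, 'k) mpoly set"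
  assumes L_mon: "\<forall>l. \<forall>j<m. monomial_ideal_in (blk -` {l}) (L l (a j l))"
    and L_chain: "\<forall>l. \<forall>j<m. \<forall>k<m. a j l \<ge> a k l \<longrightarrow> L l (a j l) \<subseteq> L l (a k l)"
  shows "j < beta (Suc i) \<Longrightarrow>
    Lcx (\<lambda>j. ideal_prod (\<lambda>l. L l (a j l))) beta lam (Suc i) j = ideal_prod (\<lambda>l. L l (deg (Suc i) j l))"
proof (induction i arbitrary: j)
  case 0
  then show ?case
    using beta_1 deg_1 by simp
next
  case (Suc i)
  define S where "S = {k. k < beta (Suc i) \<and> lam (Suc (Suc i)) k j \<noteq> 0}"
  have mon: "monomial_ideal_in (blk -` {l}) (L l (deg (Suc i') k l))" if "k < beta (Suc i')" for l i' k
    using L_mon deg_realized[OF that, of l] by metis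
  have chain: "L l (deg (Suc (Suc i)) j l) \<subseteq> L l (deg (Suc i) k l)" if "k \<in> S" for l k
  proof -
    have k: "k < beta (Suc i)" "deg (Suc i) k l \<le> deg (Suc (Suc i)) j l"
      using that deg_le[of "Suc (Suc i)" k j] Suc.prems by (auto simp: S_def le_fun_def)
    obtain kj where "kj < m" "a kj l = deg (Suc (Suc i)) j l"
      using deg_realized[OF Suc.prems] by blast
    moreover obtain kk where "kk < m" "a kk l = deg (Suc i) k l"
      using deg_realized[OF k(1)] by blast
    ultimately show ?thesis
      using L_chain k(2) by metis
  qed
  have "Lcx (\<lambda>j. ideal_prod (\<lambda>l. L l (a j l))) beta lam (Suc (Suc i)) j
      = (\<Inter>k\<in>S. Lcx (\<lambda>j. ideal_prod (\<lambda>l. L l (a j l))) beta lam (Suc i) k)"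
    by (simp add: S_def setcompr_eq_image)
  also have "\<dots> = (\<Inter>k\<in>S. ideal_prod (\<lambda>l. L l (deg (Suc i) k l)))"
    by (rule INF_cong[OF refl]) (simp add: Suc.IH S_def)
  also have "\<dots> = (\<Inter>k\<in>S. \<Inter>l. L l (deg (Suc i) k l))"
    by (intro INF_cong refl ideal_prod_eq_Inter[where blk = blk]) (use mon in \<open>auto simp: S_def\<close>)
  also have "\<dots> = (\<Inter>l. \<Inter>k\<in>S. L l (deg (Suc i) k l))"
    by (rule INF_commute)
  also have "\<dots> = (\<Inter>l. L l (deg (Suc (Suc i)) j l))"
  proof (rule INF_cong[OF refl], rule equalityI)
    fix l
    obtain k where "k \<in> S" "deg (Suc i) k l = deg (Suc (Suc i)) j l"
      using deg_attained[of "Suc (Suc i)" j l] Suc.prems by (auto simp: S_def)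
    then show "(\<Inter>k\<in>S. L l (deg (Suc i) k l)) \<subseteq> L l (deg (Suc (Suc i)) j l)"
      by (metis INT_lower)
    show "L l (deg (Suc (Suc i)) j l) \<subseteq> (\<Inter>k\<in>S. L l (deg (Suc i) k l))"
      using chain by blast
  qed
  also have "\<dots> = ideal_prod (\<lambda>l. L l (deg (Suc (Suc i)) j l))"
    using ideal_prod_eq_Inter[OF mon[OF Suc.prems]] by simp
  finally show ?case .
qed

end

theorem corollary1p7:
  fixes a :: "nat \<Rightarrow> 'v::finite \<Rightarrow> nat"
    and m p :: nat
    and I :: "('v, 'k::field) mpoly set"
    and beta :: "nat \<Rightarrow> nat"
    and deg :: "nat \<Rightarrow> nat \<Rightarrow> 'v \<Rightarrow> nat"
    and lam :: "nat \<Rightarrow> nat \<Rightarrow> nat \<Rightarrow> 'k"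
    and blk :: "'w::finite \<Rightarrow> 'v"
    and L :: "'v \<Rightarrow> nat \<Rightarrow> ('w, 'k) mpoly set"
  assumes I_def: "I = ideal_gen ((\<lambda>j. xmon (a j)) ` {..<m})"
    and I_proper: "I \<noteq> UNIV"
    and G_min: "\<forall>j<m. \<forall>k<m. j \<noteq> k \<longrightarrow> \<not> a j \<le> a k"
    and res: "is_min_graded_resolution m a p beta deg lam"
    and L_mon: "\<forall>l. \<forall>j<m. monomial_ideal_in (blk -` {l}) (L l (a j l))"
    and L_chain: "\<forall>l. \<forall>j<m. \<forall>k<m. a j l \<ge> a k l \<longrightarrow> L l (a j l) \<subseteq> L l (a k l)"
  shows "\<forall>i\<in>{1..p}. \<forall>j<beta i.
           (\<forall>l. \<exists>k<m. a k l = deg i j l) \<and>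
           Lcx (\<lambda>j. ideal_prod (\<lambda>l. L l (a j l))) beta lam i j
             = ideal_prod (\<lambda>l. L l (deg i j l))"
proof (intro ballI allI impI)
  fix i j
  assume "i \<in> {1..p}" and j: "j < beta i"
  then obtain i' where i: "i = Suc i'"
    by (cases i) auto
  interpret min_graded_resolution m a p beta deg lam
    by (rule min_graded_resolution.intro[OF res])
  show "(\<forall>l. \<exists>k<m. a k l = deg i j l) \<and>
      Lcx (\<lambda>j. ideal_prod (\<lambda>l. L l (a j l))) beta lam i j = ideal_prod (\<lambda>l. L l (deg i j l))"
    using deg_realized Lcx_eq_ideal_prod[OF L_mon L_chain] j unfolding i by blast
qed

end
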